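(* Let $N\ge 2$. For every $\mathbf w\in W_N$, $$\|\mathbf w\|^2\le\binom{2N}{N}-2,$$ with equality if and only if $\mathbf w(x)=(x+\zeta)^N$ for some $N$-th root of unity $\zeta$.
   Context: Let $N\ge 2$ be an integer and $\mathbb T=\{z\in\mathbb C:|z|=1\}$. For $\mathbf a=(a_1,\dots,a_{N-1})\in\mathbb R^{N-1}$ define $\mathbf c=(c_1,\dots,c_{N-1})\in\mathbb C^{N-1}$ by $c_j=\frac{\sqrt2}{2}(a_j+i\,a_{N-j})$ for $1\le j<N/2$, $c_{N/2}=a_{N/2}$ (only when $N$ is even), and $c_j=\frac{\sqrt2}{2}(a_{N-j}-i\,a_j)$ for $N/2<j\le N-1$ (so $c_{N-j}=\overline{c_j}$ and $\|\mathbf c\|=\|\mathbf a\|$). Associate to $\mathbf a$ the monic polynomial $\mathbf a(x)=x^N+\sum_{n=1}^{N-1}c_nx^{N-n}+1$. Define $W_N=\{\mathbf a\in\mathbb R^{N-1}:\text{all roots of }\mathbf a(x)\text{ lie in }\mathbb T\}$. $\|\cdot\|$ is the Euclidean norm on $\mathbb R^{N-1}$. *)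

theory Defs
  imports "HOL-Analysis.Analysis" "HOL-Computational_Algebra.Polynomial"
begin

text \<open>A vector a in R^(N-1) is represented as a function nat => real
  supported on {1..N-1} (components a 1, ..., a (N-1)).\<close>

definition is_vec :: "nat \<Rightarrow> (nat \<Rightarrow> real) \<Rightarrow> bool" where
  "is_vec N a \<longleftrightarrow> (\<forall>k. k \<notin> {1..N-1} \<longrightarrow> a k = 0)"

definition cvec :: "nat \<Rightarrow> (nat \<Rightarrow> real) \<Rightarrow> nat \<Rightarrow> complex" where
  "cvec N a j =
     (if 2 * j < N then complex_of_real (sqrt 2 / 2) * (complex_of_real (a j) + \<i> * complex_of_real (a (N - j)))
      else if 2 * j = N then complex_of_real (a j)
      else complex_of_real (sqrt 2 / 2) * (complex_of_real (a (N - j)) - \<i> * complex_of_real (a j)))"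

definition apoly :: "nat \<Rightarrow> (nat \<Rightarrow> real) \<Rightarrow> complex poly" where
  "apoly N a = monom 1 N + (\<Sum>n\<in>{1..N-1}. monom (cvec N a n) (N - n)) + 1"

definition W :: "nat \<Rightarrow> (nat \<Rightarrow> real) set" where
  "W N = {a. is_vec N a \<and> (\<forall>z. poly (apoly N a) z = 0 \<longrightarrow> cmod z = 1)}"

definition vnorm :: "nat \<Rightarrow> (nat \<Rightarrow> real) \<Rightarrow> real" where
  "vnorm N a = sqrt (\<Sum>j\<in>{1..N-1}. (a j)\<^sup>2)"

end

theory Submission
  imports Defs "HOL-Computational_Algebra.Fundamental_Theorem_Algebra"
begin

text \<open>A monic polynomial of degree \<open>n\<close> with all roots in the closed unit disc is a product
  of factors \<open>x - z\<close> with \<open>|z| \<le> 1\<close>; multiplying in one factor at a time, Pascal's rule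
  gives \<open>|coeff p k| \<le> n choose k\<close>.  Summing squares over the inner coefficients
  \<open>0 < k < n\<close> and using \<open>\<Sum>\<^sub>k (n choose k)\<^sup>2 = (2n choose n)\<close> gives the bound.
  Equality forces \<open>|coeff p (n - 1)| = n\<close>, and the equality case of the triangle inequality
  then makes all roots equal and of modulus 1.  The map \<open>a \<mapsto> c\<close> is an isometry, so
  \<open>\<parallel>a\<parallel>\<^sup>2\<close> is exactly this sum of squares for the polynomial attached to \<open>a\<close>, whose
  constant coefficient 1 makes the repeated root an \<open>N\<close>-th root of unity (up to sign).\<close>

lemma norm_coeff_prod_linear_le:
  fixes A :: "complex multiset"
  assumes "\<forall>z\<in>#A. norm z \<le> 1"
  shows "norm (coeff (\<Prod>z\<in>#A. [:-z, 1:]) k) \<le> real (size A choose k)"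
  using assms
proof (induction A arbitrary: k)
  case empty
  then show ?case by (cases k) auto
next
  case (add z A)
  define q where "q = (\<Prod>z\<in>#A. [:-z, 1:])"
  have z: "norm z \<le> 1" and IH: "\<And>j. norm (coeff q j) \<le> real (size A choose j)"
    using add unfolding q_def by auto
  show ?case
  proof (cases k)
    case 0
    have "norm (coeff ([:-z, 1:] * q) 0) = norm z * norm (coeff q 0)"
      by (simp add: norm_mult)
    also have "\<dots> \<le> 1 * 1"
      using IH[of 0] z by (intro mult_mono) auto
    finally show ?thesis using 0 by (simp add: q_def)
  next
    case (Suc m)
    have "norm (coeff ([:-z, 1:] * q) (Suc m))
        \<le> norm (coeff q m) + norm z * norm (coeff q (Suc m))"
      by (simp add: norm_triangle_ineq4 flip: norm_mult)
    also have "\<dots> \<le> real (size A choose m) + 1 * real (size A choose Suc m)"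
      using IH z by (intro add_mono mult_mono) auto
    finally show ?thesis using Suc by (simp add: q_def)
  qed
qed

lemma eq_if_norm_scaleR_add_eq:
  fixes w z :: "'a::real_inner"
  assumes "norm w = 1" and "norm z \<le> 1" and "c > 0" and "norm (c *\<^sub>R w + z) = c + 1"
  shows "z = w"
proof -
  have "c + 1 \<le> c + norm z"
    using norm_triangle_ineq[of "c *\<^sub>R w" z] assms(1,3,4) by simp
  then have z: "norm z = 1" using assms(2) by simp
  then have "norm (c *\<^sub>R w) *\<^sub>R z = norm z *\<^sub>R (c *\<^sub>R w)"
    using assms(1,3,4) by (subst norm_triangle_eq[symmetric]) simp
  then have "c *\<^sub>R z = c *\<^sub>R w" using assms(1,3) z by simp
  then show ?thesis using assms(3) by simp
qed

lemma prod_linear_eq_power_if_norm_coeff_eq: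
  fixes A :: "complex multiset"
  assumes "\<forall>z\<in>#A. norm z \<le> 1" and "A \<noteq> {#}"
    and "norm (coeff (\<Prod>z\<in>#A. [:-z, 1:]) (size A - 1)) = real (size A)"
  shows "\<exists>w. (\<Prod>z\<in>#A. [:-z, 1:]) = [:-w, 1:] ^ size A"
  using assms
proof (induction A)
  case empty
  then show ?case by simp
next
  case (add z A)
  define q where "q = (\<Prod>z\<in>#A. [:-z, 1:])"
  define n where "n = size A"
  show ?case
  proof (cases "A = {#}")
    case True
    then show ?thesis by auto
  next
    case False
    then obtain m where n: "n = Suc m"
      unfolding n_def by (metis not0_implies_Suc size_eq_0_iff_empty)
    have roots: "\<forall>z\<in>#A. norm z \<le> 1" and z: "norm z \<le> 1" using add.prems by auto
    have bound: "norm (coeff q j) \<le> real (n choose j)" for j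
      unfolding q_def n_def using roots by (rule norm_coeff_prod_linear_le)
    have top: "norm (coeff q m - z * coeff q n) = real n + 1"
      using add.prems(3) n by (simp add: q_def n_def)
    moreover have "norm (coeff q m - z * coeff q n)
        \<le> norm (coeff q m) + norm z * norm (coeff q n)"
      by (simp add: norm_triangle_ineq4 flip: norm_mult)
    moreover have "norm z * norm (coeff q n) \<le> 1"
      using bound[of n] z by (simp add: mult_le_one)
    moreover have "norm (coeff q m) \<le> real n"
      using bound[of m] n by simp
    ultimately have qm: "norm (coeff q m) = real n"
      by linarith
    then obtain w where qw: "q = [:-w, 1:] ^ n"
      using add.IH[OF roots False] n unfolding q_def n_def by auto
    then have "coeff q n = 1" and qm': "coeff q m = of_nat n * (- w)"
      by (simp_all add: coeff_linear_poly_power n del: power_Suc)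
    then have "norm (real n *\<^sub>R (- w) + (- z)) = real n + 1"
      using top by (simp add: scaleR_conv_of_real)
    moreover have "norm (- w) = 1"
      using qm qm' \<open>n = Suc m\<close> by (simp add: norm_mult del: of_nat_Suc)
    ultimately have "- z = - w"
      using eq_if_norm_scaleR_add_eq[of "- w" "- z" "real n"] z n by simp
    then show ?thesis using qw by (auto simp: q_def n_def)
  qed
qed

lemma monic_poly_eq_prod_proots:
  fixes p :: "complex poly"
  assumes "lead_coeff p = 1"
  shows "p = (\<Prod>z\<in>#proots p. [:-z, 1:])"
  using complex_poly_decompose_multiset[of p] assms by simp

lemma proots_in_unit_disc:
  fixes p :: "complex poly"
  assumes "lead_coeff p = 1" and "\<forall>z. poly p z = 0 \<longrightarrow> norm z \<le> 1"
  shows "\<forall>z\<in>#proots p. norm z \<le> 1"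
proof -
  have "p \<noteq> 0" using assms(1) by auto
  then show ?thesis using assms(2) by simp
qed

lemma norm_coeff_le_binomial:
  fixes p :: "complex poly"
  assumes "lead_coeff p = 1" and "\<forall>z. poly p z = 0 \<longrightarrow> norm z \<le> 1"
  shows "norm (coeff p k) \<le> real (degree p choose k)"
  using norm_coeff_prod_linear_le[OF proots_in_unit_disc[OF assms]]
  by (simp flip: monic_poly_eq_prod_proots[OF assms(1)] add: size_proots_complex)

lemma eq_linear_power_if_norm_coeff_eq:
  fixes p :: "complex poly"
  assumes "lead_coeff p = 1" and "\<forall>z. poly p z = 0 \<longrightarrow> norm z \<le> 1" and "degree p > 0"
    and "norm (coeff p (degree p - 1)) = real (degree p)"
  shows "\<exists>w. p = [:-w, 1:] ^ degree p"
proof -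
  have "proots p \<noteq> {#}" using assms(3) by (metis size_empty size_proots_complex less_irrefl)
  then show ?thesis
    using prod_linear_eq_power_if_norm_coeff_eq[OF proots_in_unit_disc[OF assms(1,2)]] assms(4)
    by (simp flip: monic_poly_eq_prod_proots[OF assms(1)] add: size_proots_complex)
qed

lemma norm_coeff_linear_power:
  fixes w :: complex
  assumes "norm w = 1"
  shows "norm (coeff ([:w, 1:] ^ n) k) = real (n choose k)"
proof (cases "k \<le> n")
  case True
  then show ?thesis by (simp add: coeff_linear_poly_power norm_mult norm_power assms)
next
  case False
  then show ?thesis by (simp add: coeff_eq_0 degree_linear_power)
qed

lemma sum_binomial_squares_inner:
  assumes "n \<ge> 1"
  shows "(\<Sum>k\<in>{1..n-1}. (real (n choose k))\<^sup>2) = real ((2 * n) choose n) - 2"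
proof -
  have "real ((2 * n) choose n) = (\<Sum>k\<le>n. (real (n choose k))\<^sup>2)"
    by (simp flip: choose_square_sum)
  also have "{..n} = insert 0 (insert n {1..n-1})" using assms by auto
  also have "(\<Sum>k\<in>insert 0 (insert n {1..n-1}). (real (n choose k))\<^sup>2)
      = 2 + (\<Sum>k\<in>{1..n-1}. (real (n choose k))\<^sup>2)"
    using assms by simp
  finally show ?thesis by simp
qed

lemma sum_norm_sq_inner_coeff_le:
  fixes p :: "complex poly"
  assumes "lead_coeff p = 1" and "\<forall>z. poly p z = 0 \<longrightarrow> norm z \<le> 1" and "degree p \<ge> 1"
  shows "(\<Sum>k\<in>{1..degree p - 1}. (norm (coeff p k))\<^sup>2)
    \<le> real ((2 * degree p) choose degree p) - 2"
proof -
  have "(\<Sum>k\<in>{1..degree p - 1}. (norm (coeff p k))\<^sup>2)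
      \<le> (\<Sum>k\<in>{1..degree p - 1}. (real (degree p choose k))\<^sup>2)"
    using norm_coeff_le_binomial[OF assms(1,2)] by (intro sum_mono power_mono) auto
  then show ?thesis using sum_binomial_squares_inner[OF assms(3)] by simp
qed

lemma sum_norm_sq_inner_coeff_eq_iff:
  fixes p :: "complex poly"
  assumes "lead_coeff p = 1" and "\<forall>z. poly p z = 0 \<longrightarrow> norm z \<le> 1" and "degree p \<ge> 2"
  shows "(\<Sum>k\<in>{1..degree p - 1}. (norm (coeff p k))\<^sup>2)
      = real ((2 * degree p) choose degree p) - 2
    \<longleftrightarrow> (\<exists>w. norm w = 1 \<and> p = [:-w, 1:] ^ degree p)"
    (is "?S = _ \<longleftrightarrow> _")
proof -
  define n where "n = degree p"
  have n: "n \<ge> 2" using assms(3) by (simp add: n_def)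
  then have choose: "n choose (n - 1) = n"
    by (metis Suc_diff_1 binomial_Suc_n diff_Suc_1 not_numeral_le_zero not_gr0)
  have bound: "norm (coeff p k) \<le> real (n choose k)" for k
    unfolding n_def using assms(1,2) by (rule norm_coeff_le_binomial)
  have sum_binomial: "(\<Sum>k\<in>{1..n-1}. (real (n choose k))\<^sup>2) = real ((2 * n) choose n) - 2"
    using n by (intro sum_binomial_squares_inner) simp
  show ?thesis
  proof
    assume eq: "?S = real ((2 * degree p) choose degree p) - 2"
    have top: "norm (coeff p (n - 1)) = real n"
    proof (rule ccontr)
      assume "norm (coeff p (n - 1)) \<noteq> real n"
      then have "(norm (coeff p (n - 1)))\<^sup>2 < (real (n choose (n - 1)))\<^sup>2"
        using bound[of "n - 1"] choose by (simp add: power_strict_mono)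
      then have "?S < (\<Sum>k\<in>{1..n-1}. (real (n choose k))\<^sup>2)"
        using n bound unfolding n_def
        by (intro sum_strict_mono_ex1) (auto intro: power_mono)
      then show False using eq sum_binomial by (simp add: n_def)
    qed
    have "degree p > 0" using n by (simp add: n_def)
    then obtain w where p: "p = [:-w, 1:] ^ n"
      using eq_linear_power_if_norm_coeff_eq[OF assms(1,2)] top unfolding n_def by blast
    have "coeff p (n - 1) = of_nat n * (- w)"
      unfolding p using choose n by (simp add: coeff_linear_poly_power)
    then have "norm w = 1"
      using top n by (simp add: norm_mult)
    then show "\<exists>w. norm w = 1 \<and> p = [:-w, 1:] ^ degree p"
      using p by (intro exI[of _ w]) (simp add: degree_linear_power)
  next
    assume "\<exists>w. norm w = 1 \<and> p = [:-w, 1:] ^ degree p"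
    then obtain w where "norm (- w) = 1" and "p = [:-w, 1:] ^ n"
      unfolding n_def by (metis norm_minus_cancel)
    then have "norm (coeff p k) = real (n choose k)" for k
      by (simp add: norm_coeff_linear_power)
    then show "?S = real ((2 * degree p) choose degree p) - 2"
      using sum_binomial by (simp add: n_def)
  qed
qed

lemma linear_power_unit_root_iff:
  fixes p :: "complex poly"
  assumes "coeff p 0 = 1" and "n > 0"
  shows "(\<exists>w. norm w = 1 \<and> p = [:-w, 1:] ^ n)
    \<longleftrightarrow> (\<exists>\<zeta>. \<zeta> ^ n = 1 \<and> p = [:\<zeta>, 1:] ^ n)"
proof
  assume "\<exists>w. norm w = 1 \<and> p = [:-w, 1:] ^ n"
  then obtain w where p: "p = [:-w, 1:] ^ n" by blast
  then have "(- w) ^ n = 1" using assms(1) by (simp add: coeff_linear_poly_power)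
  then show "\<exists>\<zeta>. \<zeta> ^ n = 1 \<and> p = [:\<zeta>, 1:] ^ n" using p by blast
next
  assume "\<exists>\<zeta>. \<zeta> ^ n = 1 \<and> p = [:\<zeta>, 1:] ^ n"
  then obtain \<zeta> where "\<zeta> ^ n = 1" and p: "p = [:\<zeta>, 1:] ^ n" by blast
  then have "norm \<zeta> ^ n = 1" by (metis norm_one norm_power)
  then have "norm (- \<zeta>) = 1"
    using power_eq_imp_eq_base[of "norm \<zeta>" n 1] assms(2) by simp
  then show "\<exists>w. norm w = 1 \<and> p = [:-w, 1:] ^ n"
    using p by (intro exI[of _ "- \<zeta>"]) simp
qed

lemma coeff_apoly:
  assumes "N > 0"
  shows "coeff (apoly N a) k =
    (if k = 0 \<or> k = N then 1 else if k < N then cvec N a (N - k) else 0)"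
proof -
  have "(\<Sum>n\<in>{1..N-1}. coeff (monom (cvec N a n) (N - n)) k) =
        (\<Sum>n\<in>{1..N-1}. if n = N - k then cvec N a n else 0)"
    by (rule sum.cong) (auto simp: coeff_monom)
  also have "\<dots> = (if 1 \<le> k \<and> k < N then cvec N a (N - k) else 0)"
    using assms by (subst sum.delta) auto
  finally show ?thesis
    using assms unfolding apoly_def coeff_add coeff_sum by (auto simp: coeff_monom)
qed

lemma degree_apoly:
  assumes "N > 0"
  shows "degree (apoly N a) = N"
proof (rule antisym)
  show "degree (apoly N a) \<le> N"
    using assms by (intro degree_le) (simp add: coeff_apoly)
  show "N \<le> degree (apoly N a)"
    using assms by (intro le_degree) (simp add: coeff_apoly)
qed

lemma sum_reflect_inner:
  fixes f :: "nat \<Rightarrow> 'a::comm_monoid_add"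
  assumes "N > 0"
  shows "(\<Sum>j\<in>{1..N-1}. f (N - j)) = (\<Sum>j\<in>{1..N-1}. f j)"
  using sum.atLeastAtMost_rev[of f 1 "N - 1"] assms by simp

lemma norm_cvec_sq:
  assumes "j \<in> {1..N-1}"
  shows "(norm (cvec N a j))\<^sup>2 = ((a j)\<^sup>2 + (a (N - j))\<^sup>2) / 2"
proof -
  have Complex_plus: "complex_of_real x + \<i> * complex_of_real y = Complex x y" for x y
    by (simp add: complex_eq_iff)
  have Complex_minus: "complex_of_real x - \<i> * complex_of_real y = Complex x (-y)" for x y
    by (simp add: complex_eq_iff)
  consider "2 * j < N" | "2 * j = N" | "2 * j > N" by linarith
  then show ?thesis
  proof cases
    case 1
    then show ?thesis unfolding cvec_def
      by (simp add: Complex_plus norm_mult power_mult_distrib complex_norm power_divide)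
  next
    case 2
    then have "N - j = j" by simp
    then show ?thesis unfolding cvec_def using 2 by simp
  next
    case 3
    then show ?thesis unfolding cvec_def
      by (simp add: Complex_minus norm_mult power_mult_distrib complex_norm power_divide)
  qed
qed

lemma vnorm_sq_eq_sum_norm_sq_coeff_apoly:
  assumes "N > 0"
  shows "(vnorm N a)\<^sup>2 = (\<Sum>k\<in>{1..N-1}. (norm (coeff (apoly N a) k))\<^sup>2)"
proof -
  have "(\<Sum>k\<in>{1..N-1}. (norm (coeff (apoly N a) k))\<^sup>2)
      = (\<Sum>k\<in>{1..N-1}. (norm (cvec N a (N - k)))\<^sup>2)"
    using assms by (intro sum.cong) (auto simp: coeff_apoly)
  also have "\<dots> = (\<Sum>j\<in>{1..N-1}. (norm (cvec N a j))\<^sup>2)"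
    using assms by (rule sum_reflect_inner)
  also have "\<dots> = (\<Sum>j\<in>{1..N-1}. (a j)\<^sup>2 + (a (N - j))\<^sup>2) / 2"
    by (simp add: norm_cvec_sq sum_divide_distrib)
  also have "\<dots> = (\<Sum>j\<in>{1..N-1}. (a j)\<^sup>2)"
    using sum_reflect_inner[OF assms, of "\<lambda>j. (a j)\<^sup>2"] by (simp add: sum.distrib)
  also have "\<dots> = (vnorm N a)\<^sup>2"
    unfolding vnorm_def by (simp add: sum_nonneg)
  finally show ?thesis ..
qed

theorem mainTheorem6:
  fixes N :: nat and w :: "nat \<Rightarrow> real"
  assumes "N \<ge> 2" and "w \<in> W N"
  shows "(vnorm N w)\<^sup>2 \<le> real ((2 * N) choose N) - 2 \<and>
         ((vnorm N w)\<^sup>2 = real ((2 * N) choose N) - 2 \<longleftrightarrow>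
            (\<exists>\<zeta>::complex. \<zeta> ^ N = 1 \<and> apoly N w = [:\<zeta>, 1:] ^ N))"
proof -
  define P where "P = apoly N w"
  have N: "N > 0" using assms(1) by simp
  have degree: "degree P = N" unfolding P_def using N by (rule degree_apoly)
  have monic: "lead_coeff P = 1" and const: "coeff P 0 = 1"
    using N unfolding degree by (simp_all add: P_def coeff_apoly)
  have roots: "\<forall>z. poly P z = 0 \<longrightarrow> norm z \<le> 1"
    using assms(2) unfolding W_def P_def by auto
  have norm: "(vnorm N w)\<^sup>2 = (\<Sum>k\<in>{1..N-1}. (norm (coeff P k))\<^sup>2)"
    unfolding P_def using N by (rule vnorm_sq_eq_sum_norm_sq_coeff_apoly)
  show ?thesis
    unfolding norm P_def[symmetric]
    using sum_norm_sq_inner_coeff_le[OF monic roots]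
      sum_norm_sq_inner_coeff_eq_iff[OF monic roots] linear_power_unit_root_iff[OF const N] assms(1)
    by (simp add: degree)
qed

end
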